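(* Let $G$ be a graph on $d+2$ vertices and $k>1$, and suppose there exist a nonzero vector $w \in \mathbf{1}^{\perp}$ and a real number $\gamma$ with $B_G(k) w = \gamma \mathbf{1}$. Then $\det(xJ + B_G(k))$ is the zero polynomial in $x$ if and only if $\det(B_G(k)) = 0$.
   Context: Graphs are finite and simple with vertices labeled $1,\dots,d+2$. $B_G(k)$ is the $(d+2)\times(d+2)$ matrix with $b_{ii}=0$, $b_{ij}=-1$ for non-adjacent $i\neq j$, $b_{ij}=-k^2$ for adjacent $i,j$. $J$ is the all-ones matrix, $\mathbf{1}$ the all-ones vector and $\mathbf{1}^{\perp}$ its orthogonal complement. *)

theory Defs
  imports "HOL-Analysis.Analysis" "HOL-Computational_Algebra.Polynomial"
begin

definition simple_graph :: "('n \<Rightarrow> 'n \<Rightarrow> bool) \<Rightarrow> bool" where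
  "simple_graph E \<longleftrightarrow> (\<forall>i j. E i j \<longleftrightarrow> E j i) \<and> (\<forall>i. \<not> E i i)"

definition BG :: "('n::finite \<Rightarrow> 'n \<Rightarrow> bool) \<Rightarrow> real \<Rightarrow> real^'n^'n" where
  "BG E k = (\<chi> i j. if i = j then 0 else if E i j then - (k^2) else -1)"

definition ones :: "real^'n" where "ones = (\<chi> i. 1)"
definition Jmat :: "real^'n^'n" where "Jmat = (\<chi> i j. 1)"

text \<open>The polynomial det(x J + M) in the variable x, as an element of real poly.\<close>
definition detxJ :: "real^'n::finite^'n \<Rightarrow> real poly" where
  "detxJ M = det (\<chi> i j. [: M $ i $ j, Jmat $ i $ j :])"

end

theory Submission
  imports Defs
begin

text \<open>
  Evaluating \<open>det (x J + B)\<close> at \<open>x = 0\<close> gives \<open>det B\<close>. Conversely, a singular \<open>B\<close> has a kernel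
  vector orthogonal to \<open>\<one>\<close>: if \<open>\<gamma> = 0\<close> this is \<open>w\<close> itself, and otherwise any kernel vector \<open>u\<close>
  satisfies \<open>\<gamma> (u \<bullet> \<one>) = u \<bullet> B w = B u \<bullet> w = 0\<close> by symmetry of \<open>B\<close>. Such a vector is also
  annihilated by \<open>J\<close>, hence by every \<open>x J + B\<close>. Only the symmetry of \<open>B\<^sub>G(k)\<close> is used.
\<close>

lemma det_eq_0_iff_nontrivial_kernel:
  fixes A :: "real^'n::finite^'n"
  shows "det A = 0 \<longleftrightarrow> (\<exists>x. x \<noteq> 0 \<and> A *v x = 0)"
proof -
  have "invertible A \<longleftrightarrow> (\<exists>B. B ** A = mat 1)"
    unfolding invertible_def using matrix_left_right_inverse by metis
  then show ?thesis
    using invertible_det_nz[of A] matrix_left_invertible_ker[of A] by auto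
qed

lemma inner_matrix_vector_mult_symmetric:
  fixes A :: "real^'n::finite^'n"
  assumes "transpose A = A"
  shows "u \<bullet> (A *v w) = (A *v u) \<bullet> w"
  by (metis assms dot_lmul_matrix transpose_matrix_vector)

lemma transpose_BG:
  assumes "simple_graph E"
  shows "transpose (BG E k) = BG E k"
  using assms unfolding simple_graph_def BG_def transpose_def by (simp add: vec_eq_iff)

lemma Jmat_mult_vec: "(Jmat :: real^'n::finite^'n) *v v = (v \<bullet> ones) *\<^sub>R ones"
  by (simp add: Jmat_def ones_def matrix_vector_mult_def inner_vec_def vec_eq_iff)

lemma poly_detxJ: "poly (detxJ M) x = det (M + x *\<^sub>R Jmat)"
  unfolding detxJ_def det_def by (simp add: poly_sum poly_prod Jmat_def)

lemma detxJ_eq_0_if_kernel_orthogonal_ones: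
  fixes M :: "real^'n::finite^'n"
  assumes "v \<noteq> 0" and "v \<bullet> ones = 0" and "M *v v = 0"
  shows "detxJ M = 0"
proof -
  have "(M + x *\<^sub>R Jmat) *v v = 0" for x
    using assms(2,3)
    by (simp add: matrix_vector_mult_add_rdistrib scaleR_matrix_vector_assoc[symmetric] Jmat_mult_vec)
  then have "poly (detxJ M) x = 0" for x
    unfolding poly_detxJ using det_eq_0_iff_nontrivial_kernel assms(1) by blast
  then show ?thesis
    using poly_all_0_iff_0 by blast
qed

lemma symmetric_singular_kernel_orthogonal_ones:
  fixes A :: "real^'n::finite^'n"
  assumes "transpose A = A" and "det A = 0"
    and "w \<noteq> 0" and "w \<bullet> ones = 0" and "A *v w = \<gamma> *\<^sub>R ones"
  obtains v where "v \<noteq> 0" and "v \<bullet> ones = 0" and "A *v v = 0"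
proof (cases "\<gamma> = 0")
  case True
  then show ?thesis using that assms(3-5) by simp
next
  case False
  obtain u where u: "u \<noteq> 0" "A *v u = 0"
    using assms(2) det_eq_0_iff_nontrivial_kernel by blast
  have "\<gamma> * (u \<bullet> ones) = u \<bullet> (A *v w)"
    using assms(5) by simp
  also have "\<dots> = 0"
    using inner_matrix_vector_mult_symmetric[OF assms(1)] u(2) by simp
  finally have "u \<bullet> ones = 0"
    using False by simp
  then show ?thesis using that u by blast
qed

theorem lemma3p5:
  fixes E :: "'n::finite \<Rightarrow> 'n \<Rightarrow> bool" and d :: nat and k :: real
  assumes "CARD('n) = d + 2"
    and "simple_graph E"
    and "k > 1"
    and "\<exists>w :: real^'n. \<exists>\<gamma> :: real. w \<noteq> 0 \<and> w \<bullet> ones = 0 \<and> BG E k *v w = \<gamma> *\<^sub>R ones"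
  shows "detxJ (BG E k) = 0 \<longleftrightarrow> det (BG E k) = 0"
proof
  assume "detxJ (BG E k) = 0"
  then show "det (BG E k) = 0"
    using poly_detxJ[of "BG E k" 0] by simp
next
  assume singular: "det (BG E k) = 0"
  obtain w \<gamma> where "w \<noteq> 0" "w \<bullet> ones = 0" "BG E k *v w = \<gamma> *\<^sub>R ones"
    using assms(4) by blast
  then obtain v where "v \<noteq> 0" "v \<bullet> ones = 0" "BG E k *v v = 0"
    using symmetric_singular_kernel_orthogonal_ones[OF transpose_BG[OF assms(2)] singular] by metis
  then show "detxJ (BG E k) = 0"
    by (rule detxJ_eq_0_if_kernel_orthogonal_ones)
qed

end
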